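(* Let $q=p^a$ with $p$ prime, $\mathcal V=\mathbb F_q$, and let $G=N.L\le{\rm A\Gamma L}(1,q)$, where $N=\{t_y:y\in\mathbb F_q\}$, $t_y:u\mapsto u+y$, is the group of translations and $L\le{\rm \Gamma L}(1,q)$ is transitive on $\mathcal V\setminus\{0\}$. Let $\gamma\subset\mathcal V$ with $|\gamma|=k$, $1\le k\le q-1$, such that $G_\gamma$ is transitive on $\gamma\times(\mathcal V\setminus\gamma)$. Let $A$ be the group of maps $u\mapsto uz$ ($z\in\mathbb F_q^\times$), let $M=G_\gamma\cap N=\{t_y:y\in Y\}$, and let $K=\mathbb F_p[G_\gamma\cap A]$ be the subfield of $\mathbb F_q$ generated by the scalars $z$ with $(u\mapsto uz)\in G_\gamma$. If $M\ne1$, then $M$ is a $K$-vector space (that is, $Y$ is closed under addition and under multiplication by elements of $K$) and $K$ is a proper subfield of $\mathbb F_q$. *)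

theory Defs
  imports Main "HOL-Computational_Algebra.Primes"
begin

definition field_aut :: "('a::field \<Rightarrow> 'a) \<Rightarrow> bool" where
  "field_aut \<sigma> \<longleftrightarrow> bij \<sigma> \<and> (\<forall>x y. \<sigma> (x + y) = \<sigma> x + \<sigma> y) \<and> (\<forall>x y. \<sigma> (x * y) = \<sigma> x * \<sigma> y)"

definition GammaL1 :: "('a::field \<Rightarrow> 'a) set" where
  "GammaL1 = {f. \<exists>z \<sigma>. z \<noteq> 0 \<and> field_aut \<sigma> \<and> f = (\<lambda>u. z * \<sigma> u)}"

definition transl :: "'a::field \<Rightarrow> 'a \<Rightarrow> 'a" where
  "transl y = (\<lambda>u. u + y)"

definition scal :: "'a::field \<Rightarrow> 'a \<Rightarrow> 'a" where
  "scal z = (\<lambda>u. u * z)"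

definition perm_group :: "('a \<Rightarrow> 'a) set \<Rightarrow> bool" where
  "perm_group S \<longleftrightarrow> id \<in> S \<and> (\<forall>f\<in>S. \<forall>g\<in>S. f \<circ> g \<in> S) \<and> (\<forall>f\<in>S. bij f \<and> inv f \<in> S)"

definition NL :: "('a::field \<Rightarrow> 'a) set \<Rightarrow> ('a \<Rightarrow> 'a) set" where
  "NL L = {transl y \<circ> l | y l. l \<in> L}"

definition setstab :: "('a \<Rightarrow> 'a) set \<Rightarrow> 'a set \<Rightarrow> ('a \<Rightarrow> 'a) set" where
  "setstab G \<gamma> = {g \<in> G. g ` \<gamma> = \<gamma>}"

definition transitive_on :: "('a \<Rightarrow> 'a) set \<Rightarrow> 'a set \<Rightarrow> bool" where
  "transitive_on H X \<longleftrightarrow> (\<forall>u\<in>X. \<forall>v\<in>X. \<exists>h\<in>H. h u = v)"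

definition transitive_on_pairs :: "('a \<Rightarrow> 'a) set \<Rightarrow> 'a set \<Rightarrow> 'a set \<Rightarrow> bool" where
  "transitive_on_pairs H X Y \<longleftrightarrow>
     (\<forall>u\<in>X. \<forall>v\<in>Y. \<forall>u'\<in>X. \<forall>v'\<in>Y. \<exists>h\<in>H. h u = u' \<and> h v = v')"

definition is_subfield :: "'a::field set \<Rightarrow> bool" where
  "is_subfield S \<longleftrightarrow> 0 \<in> S \<and> 1 \<in> S \<and> (\<forall>x\<in>S. \<forall>y\<in>S. x + y \<in> S \<and> x * y \<in> S)
      \<and> (\<forall>x\<in>S. - x \<in> S) \<and> (\<forall>x\<in>S. x \<noteq> 0 \<longrightarrow> inverse x \<in> S)"

definition gen_subfield :: "'a::field set \<Rightarrow> 'a set" where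
  "gen_subfield Z = \<Inter> {S. is_subfield S \<and> Z \<subseteq> S}"

end

theory Submission
  imports Defs
begin

text \<open>The translations in the stabiliser of \<open>\<gamma>\<close> correspond to the period group \<open>Y\<close> of \<open>\<gamma>\<close>, and every
  stabilising scalar multiplies \<open>Y\<close> into itself. The multipliers of a finite additive subgroup form
  a subfield, so they contain the field \<open>K\<close> generated by those scalars. If \<open>K\<close> were the whole field,
  \<open>Y \<noteq> 0\<close> would force \<open>Y\<close> to be everything, i.e. \<open>\<gamma>\<close> would be invariant under all translations,
  which is impossible for a nonempty proper subset.\<close>

definition periods :: "'a::group_add set \<Rightarrow> 'a set" where
  "periods \<gamma> = {y. (\<lambda>u. u + y) ` \<gamma> = \<gamma>}"

definition multipliers :: "'a::field set \<Rightarrow> 'a set" where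
  "multipliers Y = {c. \<forall>y\<in>Y. c * y \<in> Y}"

lemma transl_in_setstab_NL_iff:
  assumes "perm_group L"
  shows "transl y \<in> setstab (NL L) \<gamma> \<longleftrightarrow> y \<in> periods \<gamma>"
proof -
  have "id \<in> L" using assms by (simp add: perm_group_def)
  then have "transl y \<in> NL L" unfolding NL_def by (metis (mono_tags, lifting) comp_id mem_Collect_eq)
  then show ?thesis by (simp add: setstab_def transl_def periods_def)
qed

lemma zero_in_periods: "0 \<in> periods \<gamma>"
  by (simp add: periods_def)

lemma add_in_periods:
  assumes "y \<in> periods \<gamma>" "y' \<in> periods \<gamma>"
  shows "y + y' \<in> periods \<gamma>"
proof -
  have "(\<lambda>u. u + (y + y')) ` \<gamma> = (\<lambda>u. u + y') ` ((\<lambda>u. u + y) ` \<gamma>)"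
    by (simp add: image_image add.assoc)
  then show ?thesis using assms by (simp add: periods_def)
qed

lemma uminus_in_periods:
  assumes "y \<in> periods \<gamma>"
  shows "- y \<in> periods \<gamma>"
proof -
  have "(\<lambda>u. u + - y) ` ((\<lambda>u. u + y) ` \<gamma>) = \<gamma>"
    by (simp add: image_image)
  then show ?thesis using assms by (simp add: periods_def)
qed

lemma mult_in_periods:
  fixes \<gamma> :: "'a::field set"
  assumes "y \<in> periods \<gamma>" and "(\<lambda>u. u * z) ` \<gamma> = \<gamma>"
  shows "z * y \<in> periods \<gamma>"
proof -
  have "(\<lambda>u. u + z * y) ` \<gamma> = (\<lambda>u. u + z * y) ` ((\<lambda>u. u * z) ` \<gamma>)"
    using assms(2) by simp
  also have "\<dots> = (\<lambda>u. u * z) ` ((\<lambda>u. u + y) ` \<gamma>)"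
    by (simp add: image_image algebra_simps)
  finally show ?thesis using assms by (simp add: periods_def)
qed

lemma periods_eq_UNIV_imp:
  fixes \<gamma> :: "'a::ab_group_add set"
  assumes "periods \<gamma> = UNIV" and "\<gamma> \<noteq> {}"
  shows "\<gamma> = UNIV"
proof -
  obtain g where g: "g \<in> \<gamma>" using assms(2) by blast
  have "v \<in> \<gamma>" for v
  proof -
    have "v \<in> (\<lambda>u. u + (v - g)) ` \<gamma>" using g by force
    moreover have "(\<lambda>u. u + (v - g)) ` \<gamma> = \<gamma>"
      using assms(1) by (auto simp: periods_def set_eq_iff)
    ultimately show ?thesis by simp
  qed
  then show ?thesis by blast
qed

lemma is_subfield_multipliers:
  fixes Y :: "'a::field set"
  assumes "finite Y" and "0 \<in> Y"
    and add: "\<And>y y'. y \<in> Y \<Longrightarrow> y' \<in> Y \<Longrightarrow> y + y' \<in> Y"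
    and uminus: "\<And>y. y \<in> Y \<Longrightarrow> - y \<in> Y"
  shows "is_subfield (multipliers Y)"
  unfolding is_subfield_def
proof (intro conjI ballI impI)
  show "0 \<in> multipliers Y" "1 \<in> multipliers Y"
    using \<open>0 \<in> Y\<close> by (simp_all add: multipliers_def)
  fix x assume x: "x \<in> multipliers Y"
  show "- x \<in> multipliers Y" using x uminus by (simp add: multipliers_def)
  fix x' assume x': "x' \<in> multipliers Y"
  show "x + x' \<in> multipliers Y" using x x' add by (simp add: multipliers_def distrib_right)
  show "x * x' \<in> multipliers Y" using x x' by (simp add: multipliers_def mult.assoc)
next
  fix x assume x: "x \<in> multipliers Y" and "x \<noteq> 0"
  have onto: "(\<lambda>y. x * y) ` Y = Y"
    by (rule endo_inj_surj) (use x \<open>x \<noteq> 0\<close> \<open>finite Y\<close> in \<open>auto simp: multipliers_def inj_on_def\<close>)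
  show "inverse x \<in> multipliers Y"
    unfolding multipliers_def mem_Collect_eq
  proof
    fix y assume "y \<in> Y"
    then obtain y' where "y' \<in> Y" "y = x * y'" using onto by force
    then show "inverse x * y \<in> Y" using \<open>x \<noteq> 0\<close> by (simp add: mult.assoc[symmetric])
  qed
qed

lemma multipliers_eq_UNIV_imp:
  fixes Y :: "'a::field set"
  assumes "multipliers Y = UNIV" and "y0 \<in> Y" and "y0 \<noteq> 0"
  shows "Y = UNIV"
proof -
  have "y / y0 * y0 \<in> Y" for y
    using assms(1,2) unfolding multipliers_def by blast
  then show ?thesis using \<open>y0 \<noteq> 0\<close> by auto
qed

lemma gen_subfield_least:
  assumes "is_subfield S" and "Z \<subseteq> S"
  shows "gen_subfield Z \<subseteq> S"
  using assms unfolding gen_subfield_def by blast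

theorem lemma6p3:
  fixes p e :: nat and L :: "('a::{field,finite} \<Rightarrow> 'a) set"
    and \<gamma> :: "'a set" and k :: nat
  assumes "prime p" and "card (UNIV :: 'a set) = p ^ e"
    and "perm_group L" and "L \<subseteq> GammaL1"
    and "transitive_on L (UNIV - {0})"
    and "card \<gamma> = k" and "1 \<le> k" and "k \<le> card (UNIV :: 'a set) - 1"
    and "transitive_on_pairs (setstab (NL L) \<gamma>) \<gamma> (UNIV - \<gamma>)"
    and "{y. transl y \<in> setstab (NL L) \<gamma>} \<noteq> {0}"
  shows "(\<forall>y\<in>{y. transl y \<in> setstab (NL L) \<gamma>}. \<forall>y'\<in>{y. transl y \<in> setstab (NL L) \<gamma>}.
            y + y' \<in> {y. transl y \<in> setstab (NL L) \<gamma>})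
       \<and> (\<forall>c\<in>gen_subfield {z. z \<noteq> 0 \<and> scal z \<in> setstab (NL L) \<gamma>}.
            \<forall>y\<in>{y. transl y \<in> setstab (NL L) \<gamma>}. c * y \<in> {y. transl y \<in> setstab (NL L) \<gamma>})
       \<and> gen_subfield {z. z \<noteq> 0 \<and> scal z \<in> setstab (NL L) \<gamma>} \<noteq> UNIV"
proof -
  let ?Y = "periods \<gamma>" and ?Z = "{z. z \<noteq> 0 \<and> scal z \<in> setstab (NL L) \<gamma>}"
  have Y: "{y. transl y \<in> setstab (NL L) \<gamma>} = ?Y"
    using transl_in_setstab_NL_iff[OF \<open>perm_group L\<close>] by blast
  have "?Z \<subseteq> multipliers ?Y"
    by (auto simp: multipliers_def setstab_def scal_def intro: mult_in_periods)
  then have K: "gen_subfield ?Z \<subseteq> multipliers ?Y"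
    by (intro gen_subfield_least is_subfield_multipliers)
       (auto intro: zero_in_periods add_in_periods uminus_in_periods)
  have "gen_subfield ?Z \<noteq> UNIV"
  proof
    assume "gen_subfield ?Z = UNIV"
    moreover obtain y0 where "y0 \<in> ?Y" "y0 \<noteq> 0"
      using assms(10) zero_in_periods unfolding Y by blast
    ultimately have "?Y = UNIV" using K multipliers_eq_UNIV_imp by blast
    moreover have "\<gamma> \<noteq> {}" using assms(6,7) by auto
    ultimately have "\<gamma> = UNIV" by (rule periods_eq_UNIV_imp)
    then show False using assms(6-8) by (simp add: card_gt_0_iff)
  qed
  with K show ?thesis
    unfolding Y by (auto simp: multipliers_def intro: add_in_periods)
qed

end
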